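(* Let $p$ be a prime. If $p\equiv -1\pmod 6$ and $p-4$ is prime, then $\frac{p+1}{3}-1$ is a twin-4 rank. If $p\equiv 1\pmod 6$ and $p+4$ is prime, then $\frac{p-1}{3}+1$ is a twin-4 rank.
   Context: An odd integer $t\geq 3$ is called a twin-4 rank if $3t-2$ and $3t+2$ are both prime; an odd integer $t\geq 3$ that is not a twin-4 rank is called a non-rank. *)

theory Defs
  imports "HOL-Computational_Algebra.Primes"
begin

definition twin4_rank :: "int \<Rightarrow> bool" where
  "twin4_rank t \<longleftrightarrow> odd t \<and> t \<ge> 3 \<and> prime (3 * t - 2) \<and> prime (3 * t + 2)"

end

theory Submission
  imports Defs
begin

text \<open>For a prime p = 6k + 5 the rank is t = 2k + 1, with 3t - 2 = p - 4 and 3t + 2 = p;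
  for a prime p = 6k + 1 it is again t = 2k + 1, now with 3t - 2 = p and 3t + 2 = p + 4.
  In both cases t \<ge> 3, because 1 is not prime.\<close>

lemma twin4_rank_odd_iff:
  fixes k :: int
  shows "twin4_rank (2 * k + 1) \<longleftrightarrow> k \<ge> 1 \<and> prime (6 * k + 1) \<and> prime (6 * k + 5)"
proof -
  have "3 * (2 * k + 1) - 2 = 6 * k + 1" "3 * (2 * k + 1) + 2 = 6 * k + 5" by simp_all
  moreover have "2 * k + 1 \<ge> 3 \<longleftrightarrow> k \<ge> 1" by linarith
  ultimately show ?thesis unfolding twin4_rank_def by (simp add: add.commute)
qed

lemma mod_6_eq_obtain:
  fixes p r :: int
  assumes "p mod 6 = r"
  obtains k where "p = 6 * k + r"
  using assms div_mult_mod_eq[of p 6] by (metis add.commute mult.commute)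

theorem corollary2p3:
  fixes p :: int
  assumes "prime p"
  shows "(p mod 6 = 5 \<and> prime (p - 4) \<longrightarrow> twin4_rank ((p + 1) div 3 - 1))
       \<and> (p mod 6 = 1 \<and> prime (p + 4) \<longrightarrow> twin4_rank ((p - 1) div 3 + 1))"
proof (intro conjI impI)
  assume h: "p mod 6 = 5 \<and> prime (p - 4)"
  then obtain k where p: "p = 6 * k + 5" by (auto elim: mod_6_eq_obtain)
  have "p - 4 \<noteq> 1" using h by auto
  then have "k \<ge> 1" using p prime_ge_2_int[OF assms] by auto
  moreover have "(p + 1) div 3 - 1 = 2 * k + 1" "p - 4 = 6 * k + 1" using p by simp_all
  ultimately show "twin4_rank ((p + 1) div 3 - 1)"
    using h assms p by (simp only: twin4_rank_odd_iff)
next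
  assume h: "p mod 6 = 1 \<and> prime (p + 4)"
  then obtain k where p: "p = 6 * k + 1" by (auto elim: mod_6_eq_obtain)
  have "p \<noteq> 1" using assms by auto
  then have "k \<ge> 1" using p prime_ge_2_int[OF assms] by auto
  moreover have "(p - 1) div 3 + 1 = 2 * k + 1" "p + 4 = 6 * k + 5" using p by simp_all
  ultimately show "twin4_rank ((p - 1) div 3 + 1)"
    using h assms p by (simp only: twin4_rank_odd_iff)
qed

end
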